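(* Let $K\ge 1$ and $N>K$ be integers and $\mu>0$. Consider $K$ files $f_1,\dots,f_K$ stored on $N$ nodes using a systematic $(N,K)$ MDS code, each node having service rate $\mu$. Then every vector $(\lambda_1,\dots,\lambda_K)$ in the service capacity region of this system satisfies $$\sum_{i=1}^{K}\Big(\min(\lambda_i,\mu)+K(\lambda_i-\mu)^{+}\Big)\le N\mu,$$ where $(x)^+=\max(0,x)$.
   Context: Storage model: there are $K$ files $f_1,\dots,f_K$ of equal size stored on $N$ nodes labeled $1,\dots,N$, each node having service rate $\mu$. In the systematic $(N,K)$ MDS code, node $i$ stores $f_i$ for $1\le i\le K$, and nodes $K+1,\dots,N$ store parity symbols, such that file $f_i$ can be recovered either from node $i$ alone or from any $K$ of the other $N-1$ nodes. Accordingly, the recovering sets of $f_i$ are $\{i\}$ together with every $K$-element subset of $\{1,\dots,N\}\setminus\{i\}$; denote them $R^{(i)}_1,\dots,R^{(i)}_{t_i}$. Requests for $f_i$ arrive at rate $\lambda_i\ge 0$. The service capacity region is the set of vectors $(\lambda_1,\dots,\lambda_K)$ for which there exist numbers $\lambda^{(i)}_j\ge 0$ ($1\le i\le K$, $1\le j\le t_i$; the rate of requests for $f_i$ assigned to recovering set $R^{(i)}_j$) with $\sum_{j=1}^{t_i}\lambda^{(i)}_j=\lambda_i$ for every $i$, and $\sum_{i=1}^K\sum_{j:\,\ell\in R^{(i)}_j}\lambda^{(i)}_j\le\mu$ for every node $\ell\in\{1,\dots,N\}$. *)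

theory Defs
  imports Complex_Main
begin

definition recovering_sets :: "nat \<Rightarrow> nat \<Rightarrow> nat \<Rightarrow> nat set set" where
  "recovering_sets N K i = insert {i} {S. S \<subseteq> {1..N} - {i} \<and> card S = K}"

text \<open>Service capacity region: lam i is the request rate for file i (1 \<le> i \<le> K);
  a i R is the rate of requests for file i assigned to recovering set R.\<close>
definition in_service_capacity_region ::
  "nat \<Rightarrow> nat \<Rightarrow> real \<Rightarrow> (nat \<Rightarrow> real) \<Rightarrow> bool" where
  "in_service_capacity_region N K mu lam \<longleftrightarrow>
     (\<exists>a :: nat \<Rightarrow> nat set \<Rightarrow> real.
        (\<forall>i\<in>{1..K}. \<forall>R\<in>recovering_sets N K i. a i R \<ge> 0) \<and>
        (\<forall>i\<in>{1..K}. (\<Sum>R\<in>recovering_sets N K i. a i R) = lam i) \<and>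
        (\<forall>l\<in>{1..N}. (\<Sum>i\<in>{1..K}. \<Sum>R\<in>{R\<in>recovering_sets N K i. l \<in> R}. a i R) \<le> mu))"

end

theory Submission
  imports Defs
begin

text \<open>Count the total load of all nodes in two ways. Each request for \<open>f\<^sub>i\<close> served by a
  recovering set \<open>R\<close> puts load on \<open>card R\<close> nodes: one node for the systematic set \<open>{i}\<close>,
  \<open>K\<close> nodes for every other set. Writing \<open>x\<^sub>i\<close> for the rate served by node \<open>i\<close> alone, the
  total load is therefore \<open>\<Sum>\<^sub>i x\<^sub>i + K (\<lambda>\<^sub>i - x\<^sub>i)\<close>, and it is at most \<open>N\<mu>\<close>.
  Since \<open>x\<^sub>i \<le> min \<lambda>\<^sub>i \<mu>\<close> and \<open>K \<ge> 1\<close>, each summand is at least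
  \<open>min \<lambda>\<^sub>i \<mu> + K (\<lambda>\<^sub>i - \<mu>)\<^sup>+\<close>.\<close>

definition node_load :: "nat \<Rightarrow> nat \<Rightarrow> (nat \<Rightarrow> nat set \<Rightarrow> real) \<Rightarrow> nat \<Rightarrow> real" where
  "node_load N K a l = (\<Sum>i\<in>{1..K}. \<Sum>R\<in>{R\<in>recovering_sets N K i. l \<in> R}. a i R)"

definition capacity_allocation ::
  "nat \<Rightarrow> nat \<Rightarrow> real \<Rightarrow> (nat \<Rightarrow> real) \<Rightarrow> (nat \<Rightarrow> nat set \<Rightarrow> real) \<Rightarrow> bool" where
  "capacity_allocation N K mu lam a \<longleftrightarrow>
     (\<forall>i\<in>{1..K}. \<forall>R\<in>recovering_sets N K i. a i R \<ge> 0) \<and>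
     (\<forall>i\<in>{1..K}. (\<Sum>R\<in>recovering_sets N K i. a i R) = lam i) \<and>
     (\<forall>l\<in>{1..N}. node_load N K a l \<le> mu)"

lemma in_service_capacity_region_iff:
  "in_service_capacity_region N K mu lam \<longleftrightarrow> (\<exists>a. capacity_allocation N K mu lam a)"
  unfolding in_service_capacity_region_def capacity_allocation_def node_load_def ..

lemma recovering_sets_eq:
  "recovering_sets N K i = insert {i} {S. S \<subseteq> {1..N} - {i} \<and> card S = K}"
  and systematic_notin_parity_sets: "{i} \<notin> {S. S \<subseteq> {1..N} - {i} \<and> card S = K}"
  by (auto simp: recovering_sets_def)

lemma finite_parity_sets:
  fixes N K i :: nat
  shows "finite {S. S \<subseteq> {1..N} - {i} \<and> card S = K}"
  by (rule finite_subset[of _ "Pow {1..N}"]) auto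

lemma finite_recovering_sets: "finite (recovering_sets N K i)"
  using finite_parity_sets by (simp add: recovering_sets_eq)

lemma recovering_sets_subset:
  assumes "i \<in> {1..N}" and "R \<in> recovering_sets N K i"
  shows "R \<subseteq> {1..N}"
  using assms by (auto simp: recovering_sets_def)

lemma sum_recovering_sets_split:
  "(\<Sum>R\<in>recovering_sets N K i. f R) =
     f {i} + (\<Sum>R\<in>{S. S \<subseteq> {1..N} - {i} \<and> card S = K}. f R)"
  by (simp add: recovering_sets_eq sum.insert[OF finite_parity_sets systematic_notin_parity_sets])

lemma sum_recovering_sets_weighted_card:
  fixes f :: "nat set \<Rightarrow> real"
  shows "(\<Sum>R\<in>recovering_sets N K i. f R * card R) =
           f {i} + real K * ((\<Sum>R\<in>recovering_sets N K i. f R) - f {i})"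
  by (simp add: sum_recovering_sets_split sum_distrib_left mult.commute)

lemma sum_incidence_swap:
  fixes a :: "'b set \<Rightarrow> real"
  assumes "finite V" and "finite F" and "\<And>R. R \<in> F \<Longrightarrow> R \<subseteq> V"
  shows "(\<Sum>l\<in>V. \<Sum>R\<in>{R\<in>F. l \<in> R}. a R) = (\<Sum>R\<in>F. a R * card R)"
proof -
  have "(\<Sum>l\<in>V. \<Sum>R\<in>{R\<in>F. l \<in> R}. a R) = (\<Sum>R\<in>F. \<Sum>l\<in>V. if l \<in> R then a R else 0)"
    using assms(2) by (simp add: sum.inter_filter sum.swap[of _ V])
  also have "\<dots> = (\<Sum>R\<in>F. a R * card (V \<inter> R))"
    using assms(1) by (simp add: sum.If_cases mult.commute)
  also have "\<dots> = (\<Sum>R\<in>F. a R * card R)"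
    using assms(3) by (intro sum.cong) (auto simp: Int_absorb1)
  finally show ?thesis .
qed

lemma total_node_load:
  assumes "K \<le> N"
  shows "(\<Sum>l\<in>{1..N}. node_load N K a l) =
           (\<Sum>i\<in>{1..K}. a i {i} + real K * ((\<Sum>R\<in>recovering_sets N K i. a i R) - a i {i}))"
proof -
  have "(\<Sum>l\<in>{1..N}. node_load N K a l) =
          (\<Sum>i\<in>{1..K}. \<Sum>l\<in>{1..N}. \<Sum>R\<in>{R\<in>recovering_sets N K i. l \<in> R}. a i R)"
    unfolding node_load_def by (rule sum.swap)
  also have "\<dots> = (\<Sum>i\<in>{1..K}. \<Sum>R\<in>recovering_sets N K i. a i R * card R)"
    using assms
    by (intro sum.cong refl sum_incidence_swap finite_recovering_sets recovering_sets_subset) auto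
  finally show ?thesis by (simp add: sum_recovering_sets_weighted_card)
qed

context
  fixes N K mu lam a
  assumes alloc: "capacity_allocation N K mu lam a"
begin

lemma allocation_nonneg: "i \<in> {1..K} \<Longrightarrow> R \<in> recovering_sets N K i \<Longrightarrow> a i R \<ge> 0"
  using alloc by (simp add: capacity_allocation_def)

lemma allocation_sum: "i \<in> {1..K} \<Longrightarrow> (\<Sum>R\<in>recovering_sets N K i. a i R) = lam i"
  using alloc by (simp add: capacity_allocation_def)

lemma allocation_load_le: "l \<in> {1..N} \<Longrightarrow> node_load N K a l \<le> mu"
  using alloc by (simp add: capacity_allocation_def)

lemma systematic_rate_le_demand:
  assumes i: "i \<in> {1..K}"
  shows "a i {i} \<le> lam i"
proof -
  have "0 \<le> (\<Sum>R\<in>{S. S \<subseteq> {1..N} - {i} \<and> card S = K}. a i R)"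
    using i by (intro sum_nonneg allocation_nonneg) (auto simp: recovering_sets_def)
  then show ?thesis
    using allocation_sum[OF i] by (simp add: sum_recovering_sets_split)
qed

lemma systematic_rate_le_service_rate:
  assumes i: "i \<in> {1..K}" and "K \<le> N"
  shows "a i {i} \<le> mu"
proof -
  have "a i {i} \<le> (\<Sum>R\<in>{R\<in>recovering_sets N K i. i \<in> R}. a i R)"
    using i by (intro member_le_sum allocation_nonneg finite_filter finite_recovering_sets)
      (auto simp: recovering_sets_def)
  also have "\<dots> \<le> node_load N K a i"
    unfolding node_load_def using i
    by (intro member_le_sum[OF i, where f="\<lambda>j. \<Sum>R\<in>{R\<in>recovering_sets N K j. i \<in> R}. a j R"]
        sum_nonneg allocation_nonneg) auto
  also have "\<dots> \<le> mu"
    using i assms(2) by (intro allocation_load_le) auto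
  finally show ?thesis .
qed

end

lemma min_plus_excess_le:
  fixes x lam mu k :: real
  assumes "x \<le> lam" and "x \<le> mu" and "k \<ge> 1"
  shows "min lam mu + k * max 0 (lam - mu) \<le> x + k * (lam - x)"
proof (cases "lam \<le> mu")
  case True
  have "(k - 1) * x \<le> (k - 1) * lam"
    using assms by (intro mult_left_mono) auto
  with True show ?thesis by (simp add: algebra_simps)
next
  case False
  have "(k - 1) * x \<le> (k - 1) * mu"
    using assms by (intro mult_left_mono) auto
  with False show ?thesis by (simp add: algebra_simps)
qed

theorem theorem1:
  fixes N K :: nat and mu :: real and lam :: "nat \<Rightarrow> real"
  assumes "K \<ge> 1" and "N > K" and "mu > 0"
    and "in_service_capacity_region N K mu lam"
  shows "(\<Sum>i\<in>{1..K}. min (lam i) mu + real K * max 0 (lam i - mu)) \<le> real N * mu"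
proof -
  obtain a where alloc: "capacity_allocation N K mu lam a"
    using assms(4) by (auto simp: in_service_capacity_region_iff)
  have "(\<Sum>i\<in>{1..K}. min (lam i) mu + real K * max 0 (lam i - mu))
          \<le> (\<Sum>i\<in>{1..K}. a i {i} + real K * (lam i - a i {i}))"
    using assms(1,2)
    by (intro sum_mono min_plus_excess_le systematic_rate_le_demand[OF alloc]
        systematic_rate_le_service_rate[OF alloc]) auto
  also have "\<dots> = (\<Sum>l\<in>{1..N}. node_load N K a l)"
    unfolding total_node_load[OF less_imp_le[OF assms(2)]]
    by (intro sum.cong) (simp_all add: allocation_sum[OF alloc])
  also have "\<dots> \<le> (\<Sum>l\<in>{1..N}. mu)"
    by (intro sum_mono allocation_load_le[OF alloc]) auto
  finally show ?thesis by simp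
qed

end
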